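(* Let $c>0$, $\varepsilon>0$, $\Delta t,\Delta x>0$, $0\le a_\infty$, and for each $n$ and $j\in\mathbb{Z}$ let $a_{j-\frac12,L}^n, a_{j-\frac12,R}^n \in [-a_\infty, a_\infty]$ be given. Define $$\kappa_{j-\frac12,L}^n = \frac{a_{j-\frac12,L}^n}{1 - \exp\!\big(-a_{j-\frac12,L}^n \Delta x/(\varepsilon c^2)\big)}, \qquad \kappa_{j-\frac12,R}^n = \frac{a_{j-\frac12,R}^n}{1 - \exp\!\big(a_{j-\frac12,R}^n \Delta x/(\varepsilon c^2)\big)}$$ (extended by continuity at $0$), write $D_{j\pm\frac12}^n = c - \kappa_{j\pm\frac12,R}^n + \kappa_{j\pm\frac12,L}^n$ and $\lambda = \frac{c\Delta t}{\Delta x}$, and consider the well-balanced scheme $$\mu_j^{n+1} = (1-\lambda)\mu_j^n - \lambda\frac{c - \kappa_{j+\frac12,R}^n - \kappa_{j+\frac12,L}^n}{D_{j+\frac12}^n}\nu_j^n - 2\lambda\frac{\kappa_{j+\frac12,R}^n}{D_{j+\frac12}^n}\mu_{j+1}^n,$$ $$\nu_j^{n+1} = (1-\lambda)\nu_j^n - \lambda\frac{c + \kappa_{j-\frac12,R}^n + \kappa_{j-\frac12,L}^n}{D_{j-\frac12}^n}\mu_j^n + 2\lambda\frac{\kappa_{j-\frac12,L}^n}{D_{j-\frac12}^n}\nu_{j-1}^n.$$ Under the CFL condition $\frac{c\Delta t}{\Delta x} \le 1$ and the subcharacteristic condition $c \ge a_\infty$, for every $n\in\mathbb{N}$ (with $(\mu^n,\nu^n)\in\ell^1(\mathbb{Z})^2$)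 $$\sum_{j\in\mathbb{Z}}\big(|\mu_j^{n+1}| + |\nu_j^{n+1}|\big) \leq \sum_{j\in\mathbb{Z}}\big(|\mu_j^{n}| + |\nu_j^{n}|\big).$$
   Context: The unknowns are $\mu_j^n = \sigma_j^n - c\rho_j^n$, $\nu_j^n = \sigma_j^n + c\rho_j^n$, approximations of the relaxation system $\partial_t\rho + \partial_x\sigma = 0$, $\partial_t\sigma + c^2\partial_x\rho = \frac1\varepsilon(a[\rho]\rho - \sigma)$ on the grid $x_j = j\Delta x$, $t^n = n\Delta t$. In the paper the interface velocities $a_{j-\frac12,L/R}^n$ are computed by a fixed-point procedure from an $a_\infty$-Lipschitz interaction potential, which guarantees $|a_{j-\frac12,L/R}^n|\le a_\infty$. *)

theory Defs
  imports "HOL-Analysis.Analysis"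
begin

definition kappaL :: "real \<Rightarrow> real \<Rightarrow> real \<Rightarrow> real \<Rightarrow> real" where
  "kappaL eps c dx a =
     (if a = 0 then eps * c^2 / dx else a / (1 - exp (- a * dx / (eps * c^2))))"

definition kappaR :: "real \<Rightarrow> real \<Rightarrow> real \<Rightarrow> real \<Rightarrow> real" where
  "kappaR eps c dx a =
     (if a = 0 then - (eps * c^2 / dx) else a / (1 - exp (a * dx / (eps * c^2))))"

end

theory Submission
  imports Defs
begin

(* With s = eps c^2 / dx one has kappa_L(a) = s / phi(-a/s) and kappa_R(a) = - s / phi(a/s),
   where phi(t) = (e^t - 1) / t is the slope of exp between 0 and t.  Convexity of exp makes phi
   positive and increasing, so kappa_L > 0 > kappa_R, both are increasing in a, and
   kappa_L(a) + kappa_R(a) = a.  Hence |a_L|, |a_R| <= a_inf <= c gives |kappa_L + kappa_R| <= c,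
   which is exactly what makes all coefficients of the scheme nonnegative: with
   alpha = -2 kappa_R / D and beta = 2 kappa_L / D in [0,1], the new values are combinations of
   the old ones with weights 1 - lambda, lambda (1 - beta), lambda alpha and
   1 - lambda, lambda (1 - alpha), lambda beta.  Every old value is thereby distributed with
   total weight 1, so the l1 norm cannot grow. *)

definition exp_slope :: "real \<Rightarrow> real" where
  "exp_slope t = (if t = 0 then 1 else (exp t - 1) / t)"

lemma le_exp_minus_1: "(t::real) \<le> exp t - 1"
  using exp_ge_add_one_self[of t] by linarith

lemma exp_slope_ge_1: "0 \<le> t \<Longrightarrow> 1 \<le> exp_slope t"
  using le_exp_minus_1[of t] by (simp add: exp_slope_def)

lemma exp_slope_le_1: "t \<le> 0 \<Longrightarrow> exp_slope t \<le> 1"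
  using le_exp_minus_1[of t] by (simp add: exp_slope_def divide_le_eq)

lemma exp_slope_pos: "0 < exp_slope t"
proof (cases "t < 0")
  case True
  then show ?thesis by (simp add: exp_slope_def divide_neg_neg)
next
  case False
  then show ?thesis using exp_slope_ge_1[of t] by simp
qed

lemma exp_slope_mono:
  assumes "t \<le> u"
  shows "exp_slope t \<le> exp_slope u"
proof -
  note slope = convex_on_slope_le[OF exp_convex, simplified]
  consider "t < u" "u < 0" | "0 < t" "t < u" | "t \<le> 0" "0 \<le> u" | "t = u"
    using assms by linarith
  then show ?thesis
  proof cases
    case 1
    then show ?thesis using slope(2)[of t u 0] by (simp add: exp_slope_def)
  next
    case 2
    then show ?thesis using slope(1)[of 0 t u] by (simp add: exp_slope_def field_simps)
  next
    case 3
    then show ?thesis using exp_slope_le_1 exp_slope_ge_1 order_trans by blast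
  qed simp
qed

lemma inverse_exp_slope_diff: "inverse (exp_slope (- t)) - inverse (exp_slope t) = t"
proof (cases "t = 0")
  case False
  then have nz: "exp t - 1 \<noteq> 0" by simp
  have "exp_slope (- t) = (exp t - 1) / (t * exp t)"
    using False by (simp add: exp_slope_def exp_minus field_simps)
  then have "inverse (exp_slope (- t)) - inverse (exp_slope t) = t * exp t / (exp t - 1) - t / (exp t - 1)"
    using False by (simp add: exp_slope_def)
  also have "\<dots> = t * (exp t - 1) / (exp t - 1)"
    by (simp add: diff_divide_distrib right_diff_distrib)
  also have "\<dots> = t"
    using nz by simp
  finally show ?thesis .
qed (simp add: exp_slope_def)

(* No hypotheses needed: if eps c^2 / dx = 0, both sides of these identities are 0 as x / 0 = 0. *)
lemma kappaL_eq_exp_slope: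
  "kappaL eps c dx a = (eps * c^2 / dx) / exp_slope (- a / (eps * c^2 / dx))"
proof -
  define s where "s = eps * c^2 / dx"
  have "a * dx / (eps * c^2) = a / s"
    by (simp add: s_def)
  moreover have "a / (1 - exp (- (a / s))) = s / exp_slope (- a / s)" if "a \<noteq> 0"
  proof (cases "s = 0")
    case False
    then have "exp (- (a / s)) - 1 \<noteq> 0" using that by simp
    then show ?thesis using that False by (simp add: exp_slope_def field_simps)
  qed simp
  ultimately show ?thesis
    by (simp add: kappaL_def exp_slope_def flip: s_def)
qed

lemma kappaR_eq_exp_slope:
  "kappaR eps c dx a = - (eps * c^2 / dx) / exp_slope (a / (eps * c^2 / dx))"
proof -
  define s where "s = eps * c^2 / dx"
  have "a * dx / (eps * c^2) = a / s"
    by (simp add: s_def)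
  moreover have "a / (1 - exp (a / s)) = - s / exp_slope (a / s)" if "a \<noteq> 0"
  proof (cases "s = 0")
    case False
    then have "exp (a / s) - 1 \<noteq> 0" using that by simp
    then show ?thesis using that False by (simp add: exp_slope_def field_simps)
  qed simp
  ultimately show ?thesis
    by (simp add: kappaR_def exp_slope_def flip: s_def)
qed

lemma kappaL_pos: "0 < eps * c^2 / dx \<Longrightarrow> 0 < kappaL eps c dx a"
  unfolding kappaL_eq_exp_slope by (rule divide_pos_pos[OF _ exp_slope_pos])

lemma kappaR_neg: "0 < eps * c^2 / dx \<Longrightarrow> kappaR eps c dx a < 0"
  unfolding kappaR_eq_exp_slope by (intro divide_neg_pos exp_slope_pos) simp

lemma kappaL_add_kappaR:
  assumes "eps * c^2 / dx \<noteq> 0"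
  shows "kappaL eps c dx a + kappaR eps c dx a = a"
proof -
  define s where "s = eps * c^2 / dx"
  have "kappaL eps c dx a + kappaR eps c dx a
      = s * (inverse (exp_slope (- (a / s))) - inverse (exp_slope (a / s)))"
    unfolding kappaL_eq_exp_slope kappaR_eq_exp_slope s_def[symmetric]
    by (simp add: divide_inverse right_diff_distrib)
  also have "\<dots> = a"
    using assms by (simp add: inverse_exp_slope_diff s_def)
  finally show ?thesis .
qed

lemma kappaL_mono:
  assumes "0 < eps * c^2 / dx" and "a \<le> b"
  shows "kappaL eps c dx a \<le> kappaL eps c dx b"
proof -
  define s where "s = eps * c^2 / dx"
  have "exp_slope (- b / s) \<le> exp_slope (- a / s)"
    using assms by (intro exp_slope_mono divide_right_mono) (auto simp: s_def)
  then show ?thesis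
    unfolding kappaL_eq_exp_slope s_def[symmetric]
    using assms(1) by (intro divide_left_mono) (auto simp: s_def exp_slope_pos)
qed

lemma kappaR_mono:
  assumes "0 < eps * c^2 / dx" and "a \<le> b"
  shows "kappaR eps c dx a \<le> kappaR eps c dx b"
proof -
  define s where "s = eps * c^2 / dx"
  have "exp_slope (a / s) \<le> exp_slope (b / s)"
    using assms by (intro exp_slope_mono divide_right_mono) (auto simp: s_def)
  then have "s / exp_slope (b / s) \<le> s / exp_slope (a / s)"
    using assms(1) by (intro divide_left_mono) (auto simp: s_def exp_slope_pos)
  then show ?thesis
    unfolding kappaR_eq_exp_slope s_def[symmetric] by simp
qed

lemma abs_kappaL_add_kappaR_le:
  assumes "0 < eps * c^2 / dx" and "\<bar>a\<bar> \<le> r" and "\<bar>b\<bar> \<le> r"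
  shows "\<bar>kappaL eps c dx a + kappaR eps c dx b\<bar> \<le> r"
proof -
  have "kappaL eps c dx a + kappaR eps c dx b \<le> kappaL eps c dx r + kappaR eps c dx r"
    using assms by (intro add_mono kappaL_mono kappaR_mono) auto
  moreover have "kappaL eps c dx (- r) + kappaR eps c dx (- r) \<le> kappaL eps c dx a + kappaR eps c dx b"
    using assms by (intro add_mono kappaL_mono kappaR_mono) auto
  moreover have "eps * c^2 / dx \<noteq> 0"
    using assms(1) by linarith
  ultimately show ?thesis
    using kappaL_add_kappaR[of eps c dx r] kappaL_add_kappaR[of eps c dx "- r"] by linarith
qed

lemma has_sum_shift_int:
  "((\<lambda>j::int. f (j + k)) has_sum S) UNIV \<longleftrightarrow> (f has_sum S) UNIV"
  using has_sum_reindex_bij_betw[of "\<lambda>j. j + k" UNIV UNIV f S] bij_plus_right[of k] by simp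

lemma has_sum_shifted_split:
  fixes P w :: "int \<Rightarrow> real"
  assumes P: "P summable_on UNIV" "\<And>j. 0 \<le> P j" and w: "\<And>j. 0 \<le> w j" "\<And>j. w j \<le> 1"
  shows "((\<lambda>j. w (j + k) * P (j + k) + (1 - w j) * P j) has_sum infsum P UNIV) UNIV"
proof -
  have moved: "(\<lambda>j. w j * P j) summable_on UNIV"
    using P w by (intro summable_on_comparison_test[OF P(1)]) (auto intro: mult_left_le_one_le)
  have kept: "(\<lambda>j. (1 - w j) * P j) summable_on UNIV"
    using P w by (intro summable_on_comparison_test[OF P(1)]) (auto intro: mult_left_le_one_le)
  have "((\<lambda>j. w (j + k) * P (j + k)) has_sum (\<Sum>\<^sub>\<infinity>j. w j * P j)) UNIV"
    using has_sum_shift_int[of "\<lambda>j. w j * P j" k] moved by simp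
  then have "((\<lambda>j. w (j + k) * P (j + k) + (1 - w j) * P j)
      has_sum (\<Sum>\<^sub>\<infinity>j. w j * P j) + (\<Sum>\<^sub>\<infinity>j. (1 - w j) * P j)) UNIV"
    using kept by (intro has_sum_add) auto
  also have "(\<Sum>\<^sub>\<infinity>j. w j * P j) + (\<Sum>\<^sub>\<infinity>j. (1 - w j) * P j) = infsum P UNIV"
    unfolding infsum_add[OF moved kept, symmetric] by (simp add: algebra_simps)
  finally show ?thesis .
qed

lemma l1_norm_le_of_upwind_bounds:
  fixes mu nu mu' nu' \<alpha> \<beta> :: "int \<Rightarrow> real" and l :: real
  assumes l: "0 \<le> l" "l \<le> 1"
    and \<alpha>: "\<And>j. 0 \<le> \<alpha> j" "\<And>j. \<alpha> j \<le> 1" and \<beta>: "\<And>j. 0 \<le> \<beta> j" "\<And>j. \<beta> j \<le> 1"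
    and mu: "(\<lambda>j. \<bar>mu j\<bar>) summable_on UNIV" and nu: "(\<lambda>j. \<bar>nu j\<bar>) summable_on UNIV"
    and mu': "\<And>j. \<bar>mu' j\<bar> \<le> (1 - l) * \<bar>mu j\<bar> + l * (1 - \<beta> (j + 1)) * \<bar>nu j\<bar> + l * \<alpha> (j + 1) * \<bar>mu (j + 1)\<bar>"
    and nu': "\<And>j. \<bar>nu' j\<bar> \<le> (1 - l) * \<bar>nu j\<bar> + l * (1 - \<alpha> j) * \<bar>mu j\<bar> + l * \<beta> j * \<bar>nu (j - 1)\<bar>"
  shows "(\<lambda>j. \<bar>mu' j\<bar> + \<bar>nu' j\<bar>) summable_on UNIV
    \<and> (\<Sum>\<^sub>\<infinity>j. \<bar>mu' j\<bar> + \<bar>nu' j\<bar>) \<le> (\<Sum>\<^sub>\<infinity>j. \<bar>mu j\<bar> + \<bar>nu j\<bar>)"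
proof -
  define p where "p = (\<Sum>\<^sub>\<infinity>j. \<bar>mu j\<bar>)"
  define q where "q = (\<Sum>\<^sub>\<infinity>j. \<bar>nu j\<bar>)"
  define G where "G j = (1 - l) * (\<bar>mu j\<bar> + \<bar>nu j\<bar>)
      + l * (\<alpha> (j + 1) * \<bar>mu (j + 1)\<bar> + (1 - \<alpha> j) * \<bar>mu j\<bar>)
      + l * (\<beta> j * \<bar>nu (j - 1)\<bar> + (1 - \<beta> (j + 1)) * \<bar>nu j\<bar>)" for j
  have mu_split: "((\<lambda>j. \<alpha> (j + 1) * \<bar>mu (j + 1)\<bar> + (1 - \<alpha> j) * \<bar>mu j\<bar>) has_sum p) UNIV"
    unfolding p_def using mu \<alpha> by (intro has_sum_shifted_split) auto
  have nu_split: "((\<lambda>j. \<beta> j * \<bar>nu (j - 1)\<bar> + (1 - \<beta> (j + 1)) * \<bar>nu j\<bar>) has_sum q) UNIV"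
    using has_sum_shifted_split[of "\<lambda>j. \<bar>nu j\<bar>" "\<lambda>j. \<beta> (j + 1)" "- 1"] nu \<beta>
    by (simp add: q_def)
  have kept: "((\<lambda>j. \<bar>mu j\<bar> + \<bar>nu j\<bar>) has_sum p + q) UNIV"
    unfolding p_def q_def using mu nu by (intro has_sum_add) auto
  have "(G has_sum (1 - l) * (p + q) + l * p + l * q) UNIV"
    unfolding G_def[abs_def]
    by (intro has_sum_add has_sum_cmult_right kept mu_split nu_split)
  then have G: "(G has_sum p + q) UNIV"
    by (simp add: algebra_simps)
  have bound: "\<bar>mu' j\<bar> + \<bar>nu' j\<bar> \<le> G j" for j
    using mu'[of j] nu'[of j] by (simp add: G_def algebra_simps)
  have summable: "(\<lambda>j. \<bar>mu' j\<bar> + \<bar>nu' j\<bar>) summable_on UNIV"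
    using bound by (intro summable_on_comparison_test[OF has_sum_imp_summable[OF G]]) auto
  have "(\<Sum>\<^sub>\<infinity>j. \<bar>mu' j\<bar> + \<bar>nu' j\<bar>) \<le> p + q"
    using summable G bound by (intro has_sum_mono[OF has_sum_infsum]) auto
  also have "p + q = (\<Sum>\<^sub>\<infinity>j. \<bar>mu j\<bar> + \<bar>nu j\<bar>)"
    unfolding p_def q_def using infsum_add[OF mu nu] by simp
  finally show ?thesis using summable by simp
qed

lemma abs_lincomb3_le:
  fixes a b c x y z :: real
  assumes "0 \<le> a" "0 \<le> b" "0 \<le> c"
  shows "\<bar>a * x + b * y + c * z\<bar> \<le> a * \<bar>x\<bar> + b * \<bar>y\<bar> + c * \<bar>z\<bar>"
proof -
  have "\<bar>a * x + b * y + c * z\<bar> \<le> \<bar>a * x\<bar> + \<bar>b * y\<bar> + \<bar>c * z\<bar>"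
    by linarith
  with assms show ?thesis
    by (simp add: abs_mult)
qed

lemma upwind_weights:
  fixes c kL kR :: real
  defines "D \<equiv> c - kR + kL"
  assumes "0 < kL" "kR < 0" "\<bar>kL + kR\<bar> \<le> c"
  shows "0 \<le> - 2 * kR / D" "- 2 * kR / D \<le> 1" "0 \<le> 2 * kL / D" "2 * kL / D \<le> 1"
    and "(c - kR - kL) / D = 1 - 2 * kL / D" "(c + kR + kL) / D = 1 - (- 2 * kR / D)"
proof -
  have D: "0 < D"
    using assms by (simp add: D_def)
  have "- 2 * kR \<le> D" "2 * kL \<le> D"
    using assms by (auto simp: D_def abs_le_iff)
  then show "0 \<le> - 2 * kR / D" "- 2 * kR / D \<le> 1" "0 \<le> 2 * kL / D" "2 * kL / D \<le> 1"
    using assms D by (simp_all only: pos_divide_le_eq zero_le_divide_iff) auto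
  show "(c - kR - kL) / D = 1 - 2 * kL / D" "(c + kR + kL) / D = 1 - (- 2 * kR / D)"
    using D by (simp_all add: field_simps D_def)
qed

theorem lemma3:
  fixes c eps dt dx ainf :: real
    and aL aR :: "nat \<Rightarrow> int \<Rightarrow> real"
    and mu nu :: "nat \<Rightarrow> int \<Rightarrow> real"
    and n :: nat
  assumes c_pos: "c > 0" and eps_pos: "eps > 0" and dt_pos: "dt > 0" and dx_pos: "dx > 0"
    and ainf_nonneg: "0 \<le> ainf"
    and aL_bnd: "\<And>m j. \<bar>aL m j\<bar> \<le> ainf"
    and aR_bnd: "\<And>m j. \<bar>aR m j\<bar> \<le> ainf"
    and CFL: "c * dt / dx \<le> 1"
    and subchar: "c \<ge> ainf"
    and mu_step: "\<And>m j.
      mu (Suc m) j =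
        (1 - c * dt / dx) * mu m j
        - (c * dt / dx) * ((c - kappaR eps c dx (aR m (j+1)) - kappaL eps c dx (aL m (j+1)))
             / (c - kappaR eps c dx (aR m (j+1)) + kappaL eps c dx (aL m (j+1)))) * nu m j
        - 2 * (c * dt / dx) * (kappaR eps c dx (aR m (j+1))
             / (c - kappaR eps c dx (aR m (j+1)) + kappaL eps c dx (aL m (j+1)))) * mu m (j+1)"
    and nu_step: "\<And>m j.
      nu (Suc m) j =
        (1 - c * dt / dx) * nu m j
        - (c * dt / dx) * ((c + kappaR eps c dx (aR m j) + kappaL eps c dx (aL m j))
             / (c - kappaR eps c dx (aR m j) + kappaL eps c dx (aL m j))) * mu m j
        + 2 * (c * dt / dx) * (kappaL eps c dx (aL m j)
             / (c - kappaR eps c dx (aR m j) + kappaL eps c dx (aL m j))) * nu m (j-1)"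
    and mu_l1: "(\<lambda>j. \<bar>mu n j\<bar>) summable_on UNIV"
    and nu_l1: "(\<lambda>j. \<bar>nu n j\<bar>) summable_on UNIV"
  shows "(\<lambda>j. \<bar>mu (Suc n) j\<bar> + \<bar>nu (Suc n) j\<bar>) summable_on UNIV
    \<and> (\<Sum>\<^sub>\<infinity>j. \<bar>mu (Suc n) j\<bar> + \<bar>nu (Suc n) j\<bar>)
        \<le> (\<Sum>\<^sub>\<infinity>j. \<bar>mu n j\<bar> + \<bar>nu n j\<bar>)"
proof -
  define l where "l = c * dt / dx"
  define kL where "kL j = kappaL eps c dx (aL n j)" for j
  define kR where "kR j = kappaR eps c dx (aR n j)" for j
  define \<alpha> where "\<alpha> j = - 2 * kR j / (c - kR j + kL j)" for j
  define \<beta> where "\<beta> j = 2 * kL j / (c - kR j + kL j)" for j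
  have l: "0 \<le> l" "l \<le> 1"
    using c_pos dt_pos dx_pos CFL by (simp_all add: l_def)
  have scale: "0 < eps * c^2 / dx"
    using c_pos eps_pos dx_pos by simp
  have "0 < kL j" "kR j < 0" "\<bar>kL j + kR j\<bar> \<le> c" for j
    using kappaL_pos[OF scale] kappaR_neg[OF scale]
      order_trans[OF abs_kappaL_add_kappaR_le[OF scale aL_bnd aR_bnd] subchar]
    unfolding kL_def kR_def by auto
  note w = upwind_weights[OF this, folded \<alpha>_def \<beta>_def]
  have mu_eq: "mu (Suc n) j = (1 - l) * mu n j + l * (1 - \<beta> (j + 1)) * (- nu n j) + l * \<alpha> (j + 1) * mu n (j + 1)" for j
    unfolding mu_step[of n j, folded kL_def kR_def l_def] w(5) \<alpha>_def
    by (simp add: algebra_simps)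
  have nu_eq: "nu (Suc n) j = (1 - l) * nu n j + l * (1 - \<alpha> j) * (- mu n j) + l * \<beta> j * nu n (j - 1)" for j
    unfolding nu_step[of n j, folded kL_def kR_def l_def] w(6) \<beta>_def
    by (simp add: algebra_simps)
  have "\<bar>mu (Suc n) j\<bar> \<le> (1 - l) * \<bar>mu n j\<bar> + l * (1 - \<beta> (j + 1)) * \<bar>- nu n j\<bar> + l * \<alpha> (j + 1) * \<bar>mu n (j + 1)\<bar>" for j
    unfolding mu_eq using l w[of "j + 1"] by (intro abs_lincomb3_le) simp_all
  moreover have "\<bar>nu (Suc n) j\<bar> \<le> (1 - l) * \<bar>nu n j\<bar> + l * (1 - \<alpha> j) * \<bar>- mu n j\<bar> + l * \<beta> j * \<bar>nu n (j - 1)\<bar>" for j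
    unfolding nu_eq using l w[of j] by (intro abs_lincomb3_le) simp_all
  ultimately show ?thesis
    using l w mu_l1 nu_l1 by (intro l1_norm_le_of_upwind_bounds[of l \<alpha> \<beta>]) auto
qed

end
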